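(* Let $n\ge1$, $\theta_y=y\pi/n$ for $y=0,\dots,n-1$. The set of pairs $(\mathsf T_n,\mathsf W_n)$ attainable by LHS assemblages $\{\rho_{b|y}\}$ on $\mathbb C^2$ is exactly the convex polygon whose vertices are the $2(n+1)$ points (coinciding at $k=0$) $$\left(\frac kn,\ \pm\frac{\sin\left(\frac{\pi}{2}\frac kn\right)}{n\sin\left(\frac{\pi}{2n}\right)}\right),\qquad k=0,1,\dots,n,$$ and each of these points is an extreme point of the set.
   Context: An LHS assemblage on $\mathbb C^2$ with inputs $y\in\{0,\dots,n-1\}$ and outcomes $b\in\{0,1,\varnothing\}$ is $\rho_{b|y}=\sum_\lambda p(b|y,\lambda)\rho_\lambda$, where $\{\rho_\lambda\}$ is a finite family of positive semidefinite $2\times2$ matrices with $\sum_\lambda\mathrm{tr}\rho_\lambda=1$ and $p(b|y,\lambda)$ are conditional probabilities. With $Z,X$ the Pauli matrices, define $\mathsf W_n:=\frac1n\sum_{y=0}^{n-1}\mathrm{tr}\big[(\cos\theta_y Z+\sin\theta_y X)(\rho_{0|y}-\rho_{1|y})\big]$ and $\mathsf T_n:=\frac1n\sum_{y=0}^{n-1}\mathrm{tr}(\rho_{0|y}+\rho_{1|y})$. *)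

theory Defs
  imports "HOL-Analysis.Analysis"
begin

text \<open>2x2 complex matrices are modelled as \<open>complex^2^2\<close>; the index type \<open>2\<close> has
  the two elements 0 and 1 (basis vectors |0>, |1>).\<close>

type_synonym cmat2 = "complex^2^2"

datatype outcome = B0 | B1 | BNone

definition tr2 :: "cmat2 \<Rightarrow> complex" where
  "tr2 A = (\<Sum>i\<in>UNIV. A$i$i)"

definition psd2 :: "cmat2 \<Rightarrow> bool" where
  "psd2 A \<longleftrightarrow> (\<forall>v::complex^2.
     Im (\<Sum>i\<in>UNIV. \<Sum>j\<in>UNIV. cnj (v$i) * A$i$j * v$j) = 0 \<and>
     Re (\<Sum>i\<in>UNIV. \<Sum>j\<in>UNIV. cnj (v$i) * A$i$j * v$j) \<ge> 0)"

definition pauliZ :: cmat2 where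
  "pauliZ = (\<chi> i j. if i = j then (if i = 0 then 1 else -1) else 0)"

definition pauliX :: cmat2 where
  "pauliX = (\<chi> i j. if i = j then 0 else 1)"

definition LHS_assemblage :: "nat \<Rightarrow> (outcome \<Rightarrow> nat \<Rightarrow> cmat2) \<Rightarrow> bool" where
  "LHS_assemblage n rho \<longleftrightarrow>
     (\<exists>(m::nat) (rl::nat \<Rightarrow> cmat2) (p::outcome \<Rightarrow> nat \<Rightarrow> nat \<Rightarrow> real).
        (\<forall>l<m. psd2 (rl l)) \<and> (\<Sum>l<m. tr2 (rl l)) = 1 \<and>
        (\<forall>y<n. \<forall>l<m. (\<forall>b. p b y l \<ge> 0) \<and> p B0 y l + p B1 y l + p BNone y l = 1) \<and>
        (\<forall>b. \<forall>y<n. rho b y = (\<Sum>l<m. p b y l *\<^sub>R rl l)))"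

definition theta :: "nat \<Rightarrow> nat \<Rightarrow> real" where
  "theta n y = real y * pi / real n"

text \<open>The quantities are real for every assemblage; we take real parts.\<close>
definition W_n :: "nat \<Rightarrow> (outcome \<Rightarrow> nat \<Rightarrow> cmat2) \<Rightarrow> real" where
  "W_n n rho = Re ((1 / of_nat n) * (\<Sum>y<n.
      tr2 ((of_real (cos (theta n y)) *s pauliZ + of_real (sin (theta n y)) *s pauliX)
           ** (rho B0 y - rho B1 y))))"

definition T_n :: "nat \<Rightarrow> (outcome \<Rightarrow> nat \<Rightarrow> cmat2) \<Rightarrow> real" where
  "T_n n rho = Re ((1 / of_nat n) * (\<Sum>y<n. tr2 (rho B0 y + rho B1 y)))"

definition attainable :: "nat \<Rightarrow> (real \<times> real) set" where
  "attainable n = {(T_n n rho, W_n n rho) | rho. LHS_assemblage n rho}"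

definition polygon_vertices :: "nat \<Rightarrow> (real \<times> real) set" where
  "polygon_vertices n = {(real k / real n,
       s * sin (pi / 2 * (real k / real n)) / (real n * sin (pi / (2 * real n)))) | k s.
       k \<le> n \<and> s \<in> {-1, 1}}"

end

theory Submission
  imports Defs
begin

text \<open>
  Convexity of the attainable set comes from mixing hidden-variable models. A pure state with
  Bloch angle \<open>\<psi>\<close> has \<open>\<langle>cos \<theta> Z + sin \<theta> X\<rangle> = cos (\<theta> - \<psi>)\<close>; answering \<open>0\<close> (or \<open>1\<close>) on the
  first \<open>k\<close> inputs and \<open>\<emptyset>\<close> on the others, with \<open>\<psi>\<close> at the centre of the angles \<open>\<theta>\<^sub>0, \<dots>, \<theta>\<^sub>k\<^sub>-\<^sub>1\<close>,
  realises the vertex with abscissa \<open>k/n\<close>.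

  Conversely, the functional \<open>\<alpha> T + \<beta> W\<close> is linear in the hidden states, and a hidden state whose
  Bloch vector has angle \<open>\<psi>\<close> contributes at most \<open>tr \<rho> \<cdot> \<Sum>\<^sub>y max 0 (\<alpha> + \<bar>\<beta>\<bar> \<bar>cos (\<theta>\<^sub>y - \<psi>)\<bar>)\<close>.
  Modulo \<open>\<pi>\<close> the angles \<open>\<theta>\<^sub>y - \<psi>\<close> are \<open>\<pi>/n\<close>-separated, so by concavity of \<open>cos\<close> on
  \<open>[-\<pi>/2, \<pi>/2]\<close> the sum of \<open>\<bar>cos\<bar>\<close> over any \<open>k\<close> of them is maximal for \<open>k\<close> equally spaced angles
  symmetric about \<open>0\<close>, i.e.\ it is at most \<open>sin (k\<pi>/2n) / sin (\<pi>/2n)\<close>. Hence every linear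
  functional is bounded on the attainable set by its maximum over the vertices.

  Finally, \<open>k \<mapsto> sin (k\<pi>/2n)\<close> is strictly increasing and strictly concave on \<open>0, \<dots>, n\<close>, so each
  vertex is the unique maximiser of a suitable linear functional over the vertex set.
\<close>

section \<open>Sums of cosines over separated angles\<close>

lemma cos_add_cos_le_twice_cos:
  fixes x x' a :: real
  assumes "-(pi/2) \<le> x" "x \<le> pi/2" "-(pi/2) \<le> x'" "x' \<le> pi/2" "2 * \<bar>a\<bar> \<le> \<bar>x - x'\<bar>"
  shows "cos x + cos x' \<le> 2 * cos a"
proof -
  define h where "h = \<bar>x - x'\<bar> / 2"
  have cos_half_diff: "cos ((x - x') / 2) = cos h"
    unfolding h_def
    by (cases "x - x' \<ge> 0") (simp_all add: abs_if, metis cos_minus minus_diff_eq minus_divide_left)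
  have h: "\<bar>a\<bar> \<le> h" "h \<le> pi/2"
    using assms unfolding h_def by auto
  have "0 \<le> cos h"
    using h by (intro cos_ge_zero) auto
  have "cos x + cos x' = 2 * cos ((x + x') / 2) * cos h"
    using cos_plus_cos[of x x'] cos_half_diff by simp
  also have "\<dots> \<le> 2 * 1 * cos h"
    using \<open>0 \<le> cos h\<close> by (intro mult_right_mono) auto
  also have "\<dots> \<le> 2 * cos \<bar>a\<bar>"
    using h cos_monotone_0_pi_le[of "\<bar>a\<bar>" h] by simp
  also have "cos \<bar>a\<bar> = cos a"
    by (simp add: abs_if)
  finally show ?thesis
    by simp
qed

lemma sorted_separated_nth_diff_ge:
  fixes xs :: "real list"
  assumes sorted: "sorted_wrt (<) xs"
    and sep: "\<And>x y. x \<in> set xs \<Longrightarrow> y \<in> set xs \<Longrightarrow> x \<noteq> y \<Longrightarrow> d \<le> \<bar>x - y\<bar>"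
    and "i \<le> j" "j < length xs"
  shows "(real j - real i) * d \<le> xs ! j - xs ! i"
  using assms(3,4)
proof (induction j)
  case 0
  then show ?case
    by simp
next
  case (Suc j)
  show ?case
  proof (cases "i = Suc j")
    case False
    then have "i \<le> j"
      using Suc by simp
    have less: "xs ! j < xs ! Suc j"
      using sorted Suc by (simp add: sorted_wrt_nth_less)
    then have "d \<le> xs ! Suc j - xs ! j"
      using sep[of "xs ! Suc j" "xs ! j"] Suc by simp
    moreover have "(real j - real i) * d \<le> xs ! j - xs ! i"
      using Suc \<open>i \<le> j\<close> by simp
    ultimately show ?thesis
      by (simp add: algebra_simps)
  qed simp
qed

text \<open>
  Pairing the \<open>j\<close>-th smallest angle with the \<open>j\<close>-th largest, the two are at least \<open>\<bar>k - 1 - 2j\<bar> d\<close>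
  apart, which by \<open>cos_add_cos_le_twice_cos\<close> bounds their contribution by that of the symmetric
  pair \<open>\<plusminus>(k - 1 - 2j) d/2\<close>.
\<close>
lemma sum_cos_separated_le:
  fixes X :: "real set"
  assumes fin: "finite X" and range: "\<And>x. x \<in> X \<Longrightarrow> -(pi/2) \<le> x \<and> x \<le> pi/2"
    and sep: "\<And>x y. x \<in> X \<Longrightarrow> y \<in> X \<Longrightarrow> x \<noteq> y \<Longrightarrow> d \<le> \<bar>x - y\<bar>" and "0 \<le> d"
  shows "(\<Sum>x\<in>X. cos x) \<le> (\<Sum>j<card X. cos ((2 * real j - real (card X) + 1) * d / 2))"
proof -
  obtain xs where sorted: "sorted_wrt (<) xs" and set_xs: "set xs = X"
    using ex1_sorted_list_for_set_if_finite[OF fin] by blast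
  have "distinct xs"
    using sorted by (simp add: strict_sorted_iff)
  define k where "k = card X"
  have len: "length xs = k"
    unfolding k_def using \<open>distinct xs\<close> set_xs distinct_card by metis
  define a where "a j = (2 * real j - real k + 1) * d / 2" for j
  have "(\<Sum>x\<in>X. cos x) = sum_list (map cos xs)"
    using set_xs \<open>distinct xs\<close> by (metis sum.distinct_set_conv_list)
  also have "\<dots> = (\<Sum>j<k. cos (xs ! j))"
    by (simp add: sum_list_sum_nth len atLeast0LessThan)
  finally have sum_eq: "(\<Sum>x\<in>X. cos x) = (\<Sum>j<k. cos (xs ! j))" .
  have pair: "cos (xs ! j) + cos (xs ! (k - Suc j)) \<le> cos (a j) + cos (a (k - Suc j))" if "j < k" for j
  proof -
    define j' where "j' = k - Suc j"
    have "j' < k"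
      using that unfolding j'_def by simp
    have a_j': "a j' = - a j"
      unfolding a_def j'_def using that by (simp add: field_simps)
    have gap: "\<bar>real j - real j'\<bar> * d \<le> \<bar>xs ! j - xs ! j'\<bar>"
    proof (cases "j \<le> j'")
      case True
      then have "(real j' - real j) * d \<le> xs ! j' - xs ! j"
        using sorted_separated_nth_diff_ge[OF sorted, of d] sep set_xs \<open>j' < k\<close> len by simp
      then show ?thesis
        using True by (simp add: abs_if algebra_simps)
    next
      case False
      then have "(real j - real j') * d \<le> xs ! j - xs ! j'"
        using sorted_separated_nth_diff_ge[OF sorted, of d j' j] sep set_xs that len by simp
      then show ?thesis
        using False by (simp add: abs_if algebra_simps)
    qed
    have "2 * \<bar>a j\<bar> = \<bar>2 * real j - real k + 1\<bar> * \<bar>d\<bar>"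
      unfolding a_def by (simp add: abs_mult)
    also have "2 * real j - real k + 1 = real j - real j'"
      unfolding j'_def using that by simp
    finally have "2 * \<bar>a j\<bar> = \<bar>real j - real j'\<bar> * \<bar>d\<bar>" .
    then have "cos (xs ! j) + cos (xs ! j') \<le> 2 * cos (a j)"
      using gap \<open>0 \<le> d\<close> range set_xs that \<open>j' < k\<close> len
      by (intro cos_add_cos_le_twice_cos) auto
    then show ?thesis
      using a_j' unfolding j'_def by simp
  qed
  have "2 * (\<Sum>j<k. cos (xs ! j)) = (\<Sum>j<k. cos (xs ! j) + cos (xs ! (k - Suc j)))"
    using sum.nat_diff_reindex[of "\<lambda>j. cos (xs ! j)" k] by (simp add: sum.distrib)
  also have "\<dots> \<le> (\<Sum>j<k. cos (a j) + cos (a (k - Suc j)))"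
    using pair by (intro sum_mono) auto
  also have "\<dots> = 2 * (\<Sum>j<k. cos (a j))"
    using sum.nat_diff_reindex[of "\<lambda>j. cos (a j)" k] by (simp add: sum.distrib)
  finally show ?thesis
    using sum_eq unfolding a_def k_def by simp
qed

lemma sum_cos_symmetric_progression:
  fixes d :: real
  assumes "sin (d/2) \<noteq> 0"
  shows "(\<Sum>j<k. cos ((2 * real j - real k + 1) * d / 2)) = sin (real k * d / 2) / sin (d/2)"
proof -
  define F where "F j = sin ((2 * real j - real k) * d / 2)" for j
  have step: "2 * sin (d/2) * cos ((2 * real j - real k + 1) * d / 2) = F (Suc j) - F j" for j
  proof -
    define A where "A = (2 * real j - real k + 1) * d / 2"
    have "F (Suc j) = sin (A + d/2)" "F j = sin (A - d/2)"
      unfolding F_def A_def by (rule arg_cong[where f=sin], simp add: field_simps)+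
    then show ?thesis
      unfolding sin_add sin_diff by (simp add: A_def algebra_simps)
  qed
  have "2 * sin (d/2) * (\<Sum>j<k. cos ((2 * real j - real k + 1) * d / 2)) = (\<Sum>j<k. F (Suc j) - F j)"
    by (simp add: sum_distrib_left step)
  also have "\<dots> = F k - F 0"
    by (rule sum_lessThan_telescope)
  also have "\<dots> = 2 * sin (real k * d / 2)"
  proof -
    have "(2 * real k - real k) * d / 2 = real k * d / 2"
      "(2 * real 0 - real k) * d / 2 = - (real k * d / 2)"
      by (simp_all add: field_simps)
    then show ?thesis
      unfolding F_def by simp
  qed
  finally show ?thesis
    using assms by (simp add: field_simps)
qed

definition vertex_height :: "nat \<Rightarrow> nat \<Rightarrow> real" where
  "vertex_height n k = sin (pi / 2 * (real k / real n)) / (real n * sin (pi / (2 * real n)))"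

lemma sin_pi_div_two_n_pos: "n \<ge> 1 \<Longrightarrow> sin (pi / (2 * real n)) > 0"
  by (intro sin_gt_zero) (auto simp: field_simps)

lemma sum_cos_centered_eq_vertex_height:
  assumes "n \<ge> 1"
  shows "(\<Sum>j<k. cos ((2 * real j - real k + 1) * (pi / real n) / 2)) = real n * vertex_height n k"
proof -
  have "sin (pi / real n / 2) \<noteq> 0"
    using sin_pi_div_two_n_pos[OF assms] by (simp add: mult.commute)
  moreover have "real k * (pi / real n) / 2 = pi / 2 * (real k / real n)"
    by (simp add: field_simps)
  ultimately show ?thesis
    using assms sum_cos_symmetric_progression[of "pi / real n" k]
    by (simp add: vertex_height_def field_simps)
qed

lemma abs_cos_diff_int_mult_pi: "\<bar>cos (t - pi * of_int J)\<bar> = \<bar>cos t\<bar>"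
proof -
  have "sin (of_int J * pi) = 0"
    using sin_zero_iff_int2 by blast
  then have "\<bar>cos (of_int J * pi)\<bar> = 1"
    by (rule sin_zero_abs_cos_one)
  moreover have "cos (t - pi * of_int J) = cos t * cos (of_int J * pi)"
    using \<open>sin (of_int J * pi) = 0\<close> by (simp add: cos_diff mult.commute)
  ultimately show ?thesis
    by (simp add: abs_mult)
qed

lemma theta_diff_mod_pi_ge:
  assumes "y < n" "y' < n" "y \<noteq> y'"
  shows "pi / real n \<le> \<bar>theta n y - theta n y' - pi * of_int J\<bar>"
proof -
  define N where "N = int y - int y' - int n * J"
  have "N \<noteq> 0"
  proof
    assume "N = 0"
    then have eq: "int y - int y' = int n * J"
      unfolding N_def by simp
    have "J = 0"
    proof (rule ccontr)
      assume "J \<noteq> 0"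
      then have "int n * 1 \<le> int n * \<bar>J\<bar>"
        by (intro mult_left_mono) auto
      moreover have "\<bar>int y - int y'\<bar> < int n"
        using assms by auto
      ultimately show False
        using eq by (simp add: abs_mult)
    qed
    then show False
      using eq assms by simp
  qed
  then have "1 \<le> \<bar>(of_int N :: real)\<bar>"
    by linarith
  moreover have "theta n y - theta n y' - pi * of_int J = pi / real n * of_int N"
    unfolding N_def theta_def using assms by (simp add: field_simps)
  ultimately show ?thesis
    using mult_left_mono[of 1 "\<bar>of_int N\<bar>" "pi / real n"] by (simp add: abs_mult)
qed

text \<open>Each angle is moved into \<open>(-\<pi>/2, \<pi>/2]\<close> by a multiple of \<open>\<pi>\<close>, which keeps \<open>\<bar>cos\<bar>\<close>.\<close>
lemma sum_abs_cos_theta_le: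
  assumes n: "n \<ge> 1" and S: "S \<subseteq> {..<n}"
  shows "(\<Sum>y\<in>S. \<bar>cos (theta n y - \<psi>)\<bar>) \<le> real n * vertex_height n (card S)"
proof -
  define J where "J y = \<lceil>(theta n y - \<psi> - pi/2) / pi\<rceil>" for y
  define u where "u y = theta n y - \<psi> - pi * of_int (J y)" for y
  have u_range: "-(pi/2) < u y \<and> u y \<le> pi/2" for y
  proof -
    have "(theta n y - \<psi> - pi/2) / pi \<le> of_int (J y)" "of_int (J y) < (theta n y - \<psi> - pi/2) / pi + 1"
      unfolding J_def by linarith+
    then show ?thesis
      unfolding u_def by (simp add: field_simps)
  qed
  have abs_cos_u: "\<bar>cos (theta n y - \<psi>)\<bar> = cos (u y)" for y
    using abs_cos_diff_int_mult_pi[of "theta n y - \<psi>" "J y"] u_range[of y] cos_ge_zero[of "u y"]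
    unfolding u_def by simp
  have u_sep: "pi / real n \<le> \<bar>u y - u y'\<bar>" if "y \<in> S" "y' \<in> S" "y \<noteq> y'" for y y'
    using theta_diff_mod_pi_ge[of y n y' "J y - J y'"] that S
    unfolding u_def by (auto simp: algebra_simps)
  have "pi / real n > 0"
    using n by simp
  then have inj: "inj_on u S"
    using u_sep unfolding inj_on_def by force
  have "(\<Sum>y\<in>S. \<bar>cos (theta n y - \<psi>)\<bar>) = (\<Sum>x\<in>u ` S. cos x)"
    using sum.reindex[OF inj, of cos] abs_cos_u by simp
  also have "\<dots> \<le> (\<Sum>j<card (u ` S). cos ((2 * real j - real (card (u ` S)) + 1) * (pi / real n) / 2))"
    using u_range u_sep finite_subset[OF S] \<open>pi / real n > 0\<close>
    by (intro sum_cos_separated_le) (auto simp: less_imp_le)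
  also have "\<dots> = real n * vertex_height n (card S)"
    using sum_cos_centered_eq_vertex_height[OF n] card_image[OF inj] by simp
  finally show ?thesis .
qed

section \<open>Qubit operators\<close>

lemma sum_UNIV_2_0_1: "sum f (UNIV :: 2 set) = f 0 + f 1"
proof -
  have "(UNIV :: 2 set) = {0, 1}"
    using exhaust_2 by (metis UNIV_2 add_0 one_add_one insert_commute)
  then have "sum f UNIV = sum f {0, 1}"
    by (simp only:)
  also have "\<dots> = f 0 + f 1"
    by simp
  finally show ?thesis .

qed

lemma tr2_eq: "tr2 A = A$0$0 + A$1$1"
  unfolding tr2_def by (simp add: sum_UNIV_2_0_1)

definition re_tr :: "cmat2 \<Rightarrow> real" where
  "re_tr A = Re (A$0$0) + Re (A$1$1)"

text \<open>The real part of \<open>tr ((cos t Z + sin t X) A)\<close>, see \<open>tr2_spin_mult\<close>.\<close>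
definition spin_expect :: "real \<Rightarrow> cmat2 \<Rightarrow> real" where
  "spin_expect t A = cos t * (Re (A$0$0) - Re (A$1$1)) + sin t * (Re (A$0$1) + Re (A$1$0))"

text \<open>In \<open>of_real c *s pauliZ\<close> the scalar \<open>of_real c\<close> is a row vector of type \<open>complex^2\<close>.\<close>
lemma of_real_vec_nth: "(of_real r :: complex^2) $ i = of_real r"
  by (simp add: of_real_def scaleR_vec_def)

lemma tr2_spin_mult:
  "tr2 ((of_real c *s pauliZ + of_real s *s pauliX) ** A)
     = of_real c * (A$0$0 - A$1$1) + of_real s * (A$0$1 + A$1$0)"
  unfolding tr2_eq pauliZ_def pauliX_def
  by (simp add: sum_UNIV_2_0_1 matrix_matrix_mult_def algebra_simps vector_scalar_mult_def of_real_vec_nth)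

lemma re_tr_scaleR: "re_tr (c *\<^sub>R A) = c * re_tr A"
  unfolding re_tr_def by (simp add: algebra_simps)

lemma spin_expect_scaleR: "spin_expect t (c *\<^sub>R A) = c * spin_expect t A"
  unfolding spin_expect_def by (simp add: algebra_simps)

lemma tr2_scaleR: "tr2 (c *\<^sub>R A) = of_real c * tr2 A"
  unfolding tr2_eq by (simp only: vector_scaleR_component) (simp add: scaleR_conv_of_real algebra_simps)

lemma psd2_scaleR:
  assumes "0 \<le> c" "psd2 A"
  shows "psd2 (c *\<^sub>R A)"
  unfolding psd2_def
proof
  fix v :: "complex^2"
  have "(\<Sum>i\<in>UNIV. \<Sum>j\<in>UNIV. cnj (v$i) * (c *\<^sub>R A)$i$j * v$j)
      = of_real c * (\<Sum>i\<in>UNIV. \<Sum>j\<in>UNIV. cnj (v$i) * A$i$j * v$j)"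
    by (simp only: vector_scaleR_component) (simp add: scaleR_conv_of_real sum_distrib_left algebra_simps)
  then show "Im (\<Sum>i\<in>UNIV. \<Sum>j\<in>UNIV. cnj (v$i) * (c *\<^sub>R A)$i$j * v$j) = 0 \<and>
      0 \<le> Re (\<Sum>i\<in>UNIV. \<Sum>j\<in>UNIV. cnj (v$i) * (c *\<^sub>R A)$i$j * v$j)"
    using assms unfolding psd2_def by simp
qed

lemma psd2_real_quadratic_form:
  assumes "psd2 A"
  shows "0 \<le> Re (A$0$0) * x\<^sup>2 + (Re (A$0$1) + Re (A$1$0)) * x * y + Re (A$1$1) * y\<^sup>2"
proof -
  define v :: "complex^2" where "v = (\<chi> i. if i = 0 then of_real x else of_real y)"
  have "0 \<le> Re (\<Sum>i\<in>UNIV. \<Sum>j\<in>UNIV. cnj (v$i) * A$i$j * v$j)"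
    using assms unfolding psd2_def by blast
  also have "Re (\<Sum>i\<in>UNIV. \<Sum>j\<in>UNIV. cnj (v$i) * A$i$j * v$j)
      = Re (A$0$0) * x\<^sup>2 + (Re (A$0$1) + Re (A$1$0)) * x * y + Re (A$1$1) * y\<^sup>2"
    unfolding v_def by (simp add: sum_UNIV_2_0_1 power2_eq_square algebra_simps)
  finally show ?thesis .
qed

lemma psd2_re_tr_nonneg: "psd2 A \<Longrightarrow> 0 \<le> re_tr A"
  using psd2_real_quadratic_form[of A 1 0] psd2_real_quadratic_form[of A 0 1]
  unfolding re_tr_def by simp

lemma psd2_bloch_le:
  assumes "psd2 A"
  shows "(Re (A$0$0) - Re (A$1$1))\<^sup>2 + (Re (A$0$1) + Re (A$1$0))\<^sup>2 \<le> (re_tr A)\<^sup>2"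
proof -
  define a where "a = Re (A$0$0)"
  define d where "d = Re (A$1$1)"
  define b where "b = Re (A$0$1) + Re (A$1$0)"
  have q: "0 \<le> a * x\<^sup>2 + b * x * y + d * y\<^sup>2" for x y
    using psd2_real_quadratic_form[OF assms] unfolding a_def d_def b_def by blast
  have "0 \<le> a" "0 \<le> d"
    using q[of 1 0] q[of 0 1] by simp_all
  have discr: "b\<^sup>2 \<le> 4 * a * d"
  proof (cases "a + d = 0")
    case True
    then have "a = 0" "d = 0"
      using \<open>0 \<le> a\<close> \<open>0 \<le> d\<close> by auto
    then show ?thesis
      using q[of 1 "-b"] by (simp add: power2_eq_square)
  next
    case False
    have "0 \<le> a * (4 * a * d - b\<^sup>2)" "0 \<le> d * (4 * a * d - b\<^sup>2)"
      using q[of "-b" "2 * a"] q[of "2 * d" "-b"] by (simp_all add: power2_eq_square algebra_simps)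
    then have "0 \<le> (a + d) * (4 * a * d - b\<^sup>2)"
      by (simp add: algebra_simps)
    moreover have "0 < a + d"
      using False \<open>0 \<le> a\<close> \<open>0 \<le> d\<close> by simp
    ultimately show ?thesis
      by (simp add: zero_le_mult_iff)
  qed
  show ?thesis
    using discr unfolding re_tr_def a_def[symmetric] d_def[symmetric] b_def[symmetric]
    by (simp add: power2_eq_square algebra_simps)
qed

lemma psd2_spin_expect_le:
  assumes "psd2 A"
  obtains \<psi> where "\<And>t. \<bar>spin_expect t A\<bar> \<le> re_tr A * \<bar>cos (t - \<psi>)\<bar>"
proof -
  define u where "u = Re (A$0$0) - Re (A$1$1)"
  define w where "w = Re (A$0$1) + Re (A$1$0)"
  define z where "z = Complex u w"
  have polar: "rcis (cmod z) (Arg z) = z"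
    by (rule rcis_cmod_Arg)
  have u: "u = cmod z * cos (Arg z)"
    using arg_cong[OF polar, of Re] unfolding z_def by simp
  have w: "w = cmod z * sin (Arg z)"
    using arg_cong[OF polar, of Im] unfolding z_def by (simp add: rcis_def)
  have "(cmod z)\<^sup>2 \<le> (re_tr A)\<^sup>2"
    using psd2_bloch_le[OF assms] unfolding z_def u_def w_def complex_norm by simp
  then have norm_le: "cmod z \<le> re_tr A"
    using psd2_re_tr_nonneg[OF assms] by (simp add: power2_le_iff_abs_le)
  have "\<bar>spin_expect t A\<bar> \<le> re_tr A * \<bar>cos (t - Arg z)\<bar>" for t
  proof -
    have "spin_expect t A = cmod z * cos (t - Arg z)"
      unfolding spin_expect_def u_def[symmetric] w_def[symmetric] u w cos_diff
      by (simp add: algebra_simps)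
    then have "\<bar>spin_expect t A\<bar> = cmod z * \<bar>cos (t - Arg z)\<bar>"
      by (simp add: abs_mult)
    also have "\<dots> \<le> re_tr A * \<bar>cos (t - Arg z)\<bar>"
      using norm_le by (intro mult_right_mono) auto
    finally show ?thesis .
  qed
  then show ?thesis
    using that by blast
qed

definition ket :: "real \<Rightarrow> 2 \<Rightarrow> real" where
  "ket \<psi> i = (if i = 0 then cos (\<psi>/2) else sin (\<psi>/2))"

text \<open>The projector onto \<open>cos (\<psi>/2) |0\<rangle> + sin (\<psi>/2) |1\<rangle>\<close>, whose Bloch vector has angle \<open>\<psi>\<close> in the \<open>ZX\<close> plane.\<close>
definition pure_state :: "real \<Rightarrow> cmat2" where
  "pure_state \<psi> = (\<chi> i j. of_real (ket \<psi> i * ket \<psi> j))"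

lemma psd2_pure_state: "psd2 (pure_state \<psi>)"
  unfolding psd2_def
proof
  fix v :: "complex^2"
  define w where "w = (\<Sum>j\<in>UNIV. of_real (ket \<psi> j) * v$j)"
  have "(\<Sum>i\<in>UNIV. \<Sum>j\<in>UNIV. cnj (v$i) * pure_state \<psi> $i$j * v$j) = cnj w * w"
    unfolding w_def pure_state_def by (simp add: sum_UNIV_2_0_1 algebra_simps)
  also have "\<dots> = of_real ((cmod w)\<^sup>2)"
    using complex_norm_square[of w] by (simp add: mult.commute)
  finally show "Im (\<Sum>i\<in>UNIV. \<Sum>j\<in>UNIV. cnj (v$i) * pure_state \<psi> $i$j * v$j) = 0 \<and>
      0 \<le> Re (\<Sum>i\<in>UNIV. \<Sum>j\<in>UNIV. cnj (v$i) * pure_state \<psi> $i$j * v$j)"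
    by simp
qed

lemma tr2_pure_state: "tr2 (pure_state \<psi>) = 1"
  and re_tr_pure_state: "re_tr (pure_state \<psi>) = 1"
proof -
  have "(cos (\<psi>/2))\<^sup>2 + (sin (\<psi>/2))\<^sup>2 = 1"
    by simp
  then show "tr2 (pure_state \<psi>) = 1" "re_tr (pure_state \<psi>) = 1"
    unfolding tr2_eq re_tr_def pure_state_def ket_def
    by (simp_all add: power2_eq_square flip: of_real_mult of_real_add)
qed

lemma spin_expect_pure_state: "spin_expect t (pure_state \<psi>) = cos (t - \<psi>)"
proof -
  have "cos (\<psi>/2) * cos (\<psi>/2) - sin (\<psi>/2) * sin (\<psi>/2) = cos \<psi>"
    using cos_double[of "\<psi>/2"] by (simp add: power2_eq_square)
  moreover have "sin (\<psi>/2) * cos (\<psi>/2) + cos (\<psi>/2) * sin (\<psi>/2) = sin \<psi>"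
    using sin_double[of "\<psi>/2"] by simp
  ultimately show ?thesis
    unfolding spin_expect_def pure_state_def ket_def by (simp add: cos_diff)
qed

section \<open>Hidden-state models\<close>

definition lhs_model :: "nat \<Rightarrow> nat \<Rightarrow> (nat \<Rightarrow> cmat2) \<Rightarrow> (outcome \<Rightarrow> nat \<Rightarrow> nat \<Rightarrow> real) \<Rightarrow> bool" where
  "lhs_model n m rl p \<longleftrightarrow> (\<forall>l<m. psd2 (rl l)) \<and> (\<Sum>l<m. tr2 (rl l)) = 1 \<and>
     (\<forall>y<n. \<forall>l<m. (\<forall>b. 0 \<le> p b y l) \<and> p B0 y l + p B1 y l + p BNone y l = 1)"

definition model_T :: "nat \<Rightarrow> nat \<Rightarrow> (nat \<Rightarrow> cmat2) \<Rightarrow> (outcome \<Rightarrow> nat \<Rightarrow> nat \<Rightarrow> real) \<Rightarrow> real" where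
  "model_T n m rl p = (1 / real n) * (\<Sum>y<n. \<Sum>l<m. (p B0 y l + p B1 y l) * re_tr (rl l))"

definition model_W :: "nat \<Rightarrow> nat \<Rightarrow> (nat \<Rightarrow> cmat2) \<Rightarrow> (outcome \<Rightarrow> nat \<Rightarrow> nat \<Rightarrow> real) \<Rightarrow> real" where
  "model_W n m rl p =
     (1 / real n) * (\<Sum>y<n. \<Sum>l<m. (p B0 y l - p B1 y l) * spin_expect (theta n y) (rl l))"

lemma T_n_W_n_eq_model:
  assumes "\<And>b y. y < n \<Longrightarrow> rho b y = (\<Sum>l<m. p b y l *\<^sub>R rl l)"
  shows "T_n n rho = model_T n m rl p" and "W_n n rho = model_W n m rl p"
proof -
  have entry: "rho b y $ i $ j = (\<Sum>l<m. of_real (p b y l) * rl l $ i $ j)" if "y < n" for b y i j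
    by (simp only: assms[OF that] sum_component vector_scaleR_component) (simp add: scaleR_conv_of_real)
  have "T_n n rho = (1 / real n) * (\<Sum>y<n. Re (tr2 (rho B0 y + rho B1 y)))"
    unfolding T_n_def by (simp flip: Re_sum)
  also have "\<dots> = model_T n m rl p"
    unfolding model_T_def
    by (intro arg_cong[where f="\<lambda>x. (1 / real n) * x"] sum.cong refl)
       (simp add: tr2_eq entry re_tr_def algebra_simps sum_distrib_left flip: sum.distrib)
  finally show "T_n n rho = model_T n m rl p" .
  have "W_n n rho = (1 / real n) * (\<Sum>y<n. Re (tr2 ((of_real (cos (theta n y)) *s pauliZ
      + of_real (sin (theta n y)) *s pauliX) ** (rho B0 y - rho B1 y))))"
    unfolding W_n_def by (simp flip: Re_sum)
  also have "\<dots> = model_W n m rl p"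
    unfolding model_W_def
    by (intro arg_cong[where f="\<lambda>x. (1 / real n) * x"] sum.cong refl)
       (simp add: tr2_spin_mult entry spin_expect_def algebra_simps sum_distrib_left
         flip: sum_subtractf sum.distrib)
  finally show "W_n n rho = model_W n m rl p" .
qed

lemma attainable_iff_model:
  "z \<in> attainable n \<longleftrightarrow> (\<exists>m rl p. lhs_model n m rl p \<and> z = (model_T n m rl p, model_W n m rl p))"
proof
  assume "z \<in> attainable n"
  then obtain rho where z: "z = (T_n n rho, W_n n rho)" and "LHS_assemblage n rho"
    unfolding attainable_def by blast
  then obtain m rl p where "lhs_model n m rl p" and "\<forall>b. \<forall>y<n. rho b y = (\<Sum>l<m. p b y l *\<^sub>R rl l)"
    unfolding LHS_assemblage_def lhs_model_def by blast
  then show "\<exists>m rl p. lhs_model n m rl p \<and> z = (model_T n m rl p, model_W n m rl p)"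
    using T_n_W_n_eq_model z by blast
next
  assume "\<exists>m rl p. lhs_model n m rl p \<and> z = (model_T n m rl p, model_W n m rl p)"
  then obtain m rl p where model: "lhs_model n m rl p" and z: "z = (model_T n m rl p, model_W n m rl p)"
    by blast
  define rho where "rho b y = (\<Sum>l<m. p b y l *\<^sub>R rl l)" for b y
  have "LHS_assemblage n rho"
    using model unfolding LHS_assemblage_def lhs_model_def rho_def by blast
  moreover have "z = (T_n n rho, W_n n rho)"
    using z T_n_W_n_eq_model[where rho=rho and m=m and p=p and rl=rl] unfolding rho_def by simp
  ultimately show "z \<in> attainable n"
    unfolding attainable_def by blast
qed

lemma sum_lessThan_add: "(\<Sum>l<m + m'. f l) = (\<Sum>l<m. f l) + (\<Sum>l<m'. f (m + l))"
  for f :: "nat \<Rightarrow> 'a::comm_monoid_add"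
  by (induction m') (simp_all add: add.assoc)

text \<open>A mixture of two models is the model on the disjoint union of their hidden variables.\<close>
lemma convex_attainable: "convex (attainable n)"
  unfolding convex_def
proof (intro ballI allI impI)
  fix x y and u v :: real
  assume "x \<in> attainable n" "y \<in> attainable n" "0 \<le> u" "0 \<le> v" "u + v = 1"
  obtain m1 rl1 p1 where model1: "lhs_model n m1 rl1 p1" and x: "x = (model_T n m1 rl1 p1, model_W n m1 rl1 p1)"
    using \<open>x \<in> attainable n\<close> attainable_iff_model by blast
  obtain m2 rl2 p2 where model2: "lhs_model n m2 rl2 p2" and y: "y = (model_T n m2 rl2 p2, model_W n m2 rl2 p2)"
    using \<open>y \<in> attainable n\<close> attainable_iff_model by blast
  define rl where "rl l = (if l < m1 then u *\<^sub>R rl1 l else v *\<^sub>R rl2 (l - m1))" for l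
  define p where "p b y' l = (if l < m1 then p1 b y' l else p2 b y' (l - m1))" for b y' l
  have "lhs_model n (m1 + m2) rl p"
    unfolding lhs_model_def
  proof (intro conjI allI impI)
    show "psd2 (rl l)" if "l < m1 + m2" for l
      using that model1 model2 \<open>0 \<le> u\<close> \<open>0 \<le> v\<close> unfolding lhs_model_def rl_def
      by (auto intro!: psd2_scaleR)
    show "(\<Sum>l<m1 + m2. tr2 (rl l)) = 1"
      unfolding sum_lessThan_add rl_def using model1 model2 \<open>u + v = 1\<close>
      by (simp add: tr2_scaleR lhs_model_def flip: sum_distrib_left of_real_add)
  qed (use model1 model2 in \<open>auto simp: lhs_model_def p_def\<close>)
  moreover have "model_T n (m1 + m2) rl p = u * model_T n m1 rl1 p1 + v * model_T n m2 rl2 p2"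
    unfolding model_T_def sum_lessThan_add rl_def p_def
    by (simp add: re_tr_scaleR sum.distrib sum_distrib_left algebra_simps)
  moreover have "model_W n (m1 + m2) rl p = u * model_W n m1 rl1 p1 + v * model_W n m2 rl2 p2"
    unfolding model_W_def sum_lessThan_add rl_def p_def
    by (simp add: spin_expect_scaleR sum.distrib sum_distrib_left algebra_simps)
  ultimately show "u *\<^sub>R x + v *\<^sub>R y \<in> attainable n"
    using x y attainable_iff_model by fastforce
qed

section \<open>The vertices are attained\<close>

text \<open>
  A single pure hidden state at angle \<open>\<psi> = (k - 1) \<pi> / 2n\<close>, the midpoint of \<open>\<theta>\<^sub>0\<close> and \<open>\<theta>\<^sub>k\<^sub>-\<^sub>1\<close>;
  the outcome is \<open>0\<close> (for \<open>s = 1\<close>) or \<open>1\<close> (for \<open>s = -1\<close>) on the inputs \<open>y < k\<close> and \<open>\<emptyset>\<close> otherwise.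
\<close>
lemma vertex_attainable:
  assumes n: "n \<ge> 1" and "k \<le> n" and s: "s \<in> {-1, 1::real}"
  shows "(real k / real n, s * vertex_height n k) \<in> attainable n"
proof -
  define \<psi> where "\<psi> = (real k - 1) * pi / (2 * real n)"
  define b where "b = (if s = 1 then B0 else B1)"
  define p where "p b' y (l::nat) = (if y < k then (if b' = b then 1 else 0) else (if b' = BNone then 1 else 0::real))"
    for b' y l
  define rl where "rl (l::nat) = pure_state \<psi>" for l
  have model: "lhs_model n 1 rl p"
    unfolding lhs_model_def rl_def p_def b_def using psd2_pure_state tr2_pure_state by auto
  have split_k: "(\<Sum>y<n. f y) = (\<Sum>y<k. f y) + (\<Sum>l<n - k. f (k + l))" for f :: "nat \<Rightarrow> real"
    using sum_lessThan_add[where m=k and m'="n - k" and f=f] \<open>k \<le> n\<close> by simp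
  have "model_T n 1 rl p = (1 / real n) * (\<Sum>y<n. p B0 y 0 + p B1 y 0)"
    unfolding model_T_def rl_def by (simp add: re_tr_pure_state)
  also have "\<dots> = real k / real n"
    unfolding split_k p_def b_def by simp
  finally have T: "model_T n 1 rl p = real k / real n" .
  have "model_W n 1 rl p = (1 / real n) * (\<Sum>y<n. (p B0 y 0 - p B1 y 0) * cos (theta n y - \<psi>))"
    unfolding model_W_def rl_def by (simp add: spin_expect_pure_state)
  also have "\<dots> = (1 / real n) * (s * (\<Sum>y<k. cos (theta n y - \<psi>)))"
    unfolding split_k p_def b_def using s by (auto simp: sum_distrib_left)
  also have "(\<Sum>y<k. cos (theta n y - \<psi>)) = (\<Sum>j<k. cos ((2 * real j - real k + 1) * (pi / real n) / 2))"
    unfolding theta_def \<psi>_def using n by (intro sum.cong refl arg_cong[where f=cos]) (simp add: field_simps)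
  also have "\<dots> = real n * vertex_height n k"
    by (rule sum_cos_centered_eq_vertex_height[OF n])
  finally have W: "model_W n 1 rl p = s * vertex_height n k"
    using n by simp
  show ?thesis
    using attainable_iff_model model T W by metis
qed

lemma polygon_vertices_eq:
  "polygon_vertices n = (\<lambda>(k, s). (real k / real n, s * vertex_height n k)) ` ({..n} \<times> {-1, 1})"
  unfolding polygon_vertices_def vertex_height_def by (auto simp: image_iff)

lemma polygon_vertex_mem:
  "k \<le> n \<Longrightarrow> s \<in> {-1, 1} \<Longrightarrow> (real k / real n, s * vertex_height n k) \<in> polygon_vertices n"
  unfolding polygon_vertices_eq by force

lemma finite_polygon_vertices: "finite (polygon_vertices n)"
  unfolding polygon_vertices_eq by simp

lemma polygon_vertices_subset_attainable: "n \<ge> 1 \<Longrightarrow> polygon_vertices n \<subseteq> attainable n"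
  unfolding polygon_vertices_eq using vertex_attainable by auto

section \<open>Linear functionals on the attainable set\<close>

lemma mem_convex_hull_if_inner_le_Max:
  fixes P :: "'a::{real_inner,heine_borel} set"
  assumes "finite P" and "P \<noteq> {}" and le: "\<And>a. inner a z \<le> Max (inner a ` P)"
  shows "z \<in> convex hull P"
proof (rule ccontr)
  assume "z \<notin> convex hull P"
  moreover have "closed (convex hull P)"
    using \<open>finite P\<close> by (intro compact_imp_closed finite_imp_compact_convex_hull)
  ultimately obtain a b where "inner a z < b" and hull_gt: "\<forall>x\<in>convex hull P. b < inner a x"
    using separating_hyperplane_closed_point[OF convex_convex_hull] by blast
  have "Max (inner (-a) ` P) \<in> inner (-a) ` P"
    using assms by (intro Max_in) auto
  then obtain v where "v \<in> P" and "Max (inner (-a) ` P) = inner (-a) v"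
    by auto
  moreover have "b < inner a v"
    using hull_gt \<open>v \<in> P\<close> hull_subset[of P convex] by auto
  ultimately show False
    using le[of "-a"] \<open>inner a z < b\<close> by simp
qed

definition polygon_support :: "nat \<Rightarrow> real \<times> real \<Rightarrow> real" where
  "polygon_support n a = Max (inner a ` polygon_vertices n)"

lemma inner_le_polygon_support: "v \<in> polygon_vertices n \<Longrightarrow> inner a v \<le> polygon_support n a"
  unfolding polygon_support_def using finite_polygon_vertices by (intro Max_ge) auto

text \<open>Only the inputs \<open>S\<close> on which the summand is positive count, and on them \<open>sum_abs_cos_theta_le\<close> applies.\<close>
lemma sum_pos_part_le_polygon_support:
  assumes n: "n \<ge> 1"
  shows "(\<Sum>y<n. max 0 (\<alpha> + \<bar>\<beta>\<bar> * \<bar>cos (theta n y - \<psi>)\<bar>)) \<le> real n * polygon_support n (\<alpha>, \<beta>)"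
proof -
  define c where "c y = \<bar>cos (theta n y - \<psi>)\<bar>" for y
  define S where "S = {y \<in> {..<n}. 0 < \<alpha> + \<bar>\<beta>\<bar> * c y}"
  define k where "k = card S"
  define s where "s = (if 0 \<le> \<beta> then 1 else -1 :: real)"
  have "S \<subseteq> {..<n}"
    unfolding S_def by auto
  then have "k \<le> n"
    unfolding k_def using card_mono[of "{..<n}" S] by simp
  have "(\<Sum>y<n. max 0 (\<alpha> + \<bar>\<beta>\<bar> * c y)) = (\<Sum>y\<in>S. \<alpha> + \<bar>\<beta>\<bar> * c y)"
    using \<open>S \<subseteq> {..<n}\<close> by (intro sum.mono_neutral_cong_right) (auto simp: S_def)
  also have "\<dots> = \<alpha> * real k + \<bar>\<beta>\<bar> * (\<Sum>y\<in>S. c y)"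
    unfolding k_def by (simp add: sum.distrib sum_distrib_left)
  also have "\<dots> \<le> \<alpha> * real k + \<bar>\<beta>\<bar> * (real n * vertex_height n k)"
    using sum_abs_cos_theta_le[OF n \<open>S \<subseteq> {..<n}\<close>] unfolding c_def k_def
    by (intro add_left_mono mult_left_mono) auto
  also have "\<dots> = real n * inner (\<alpha>, \<beta>) (real k / real n, s * vertex_height n k)"
    using n by (simp add: s_def field_simps abs_if)
  also have "\<dots> \<le> real n * polygon_support n (\<alpha>, \<beta>)"
    using \<open>k \<le> n\<close> by (intro mult_left_mono inner_le_polygon_support polygon_vertex_mem)
      (auto simp: s_def)
  finally show ?thesis
    unfolding c_def .
qed

lemma weighted_outcome_le:
  fixes p0 p1 t e c \<alpha> \<beta> :: real
  assumes "0 \<le> p0" "0 \<le> p1" "p0 + p1 \<le> 1" "0 \<le> t" "\<bar>e\<bar> \<le> t * c"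
  shows "\<alpha> * ((p0 + p1) * t) + \<beta> * ((p0 - p1) * e) \<le> t * max 0 (\<alpha> + \<bar>\<beta>\<bar> * c)"
proof -
  have "\<beta> * ((p0 - p1) * e) \<le> \<bar>\<beta>\<bar> * (\<bar>p0 - p1\<bar> * \<bar>e\<bar>)"
    by (metis abs_ge_self abs_mult)
  also have "\<dots> \<le> \<bar>\<beta>\<bar> * ((p0 + p1) * (t * c))"
    using assms by (intro mult_left_mono mult_mono) auto
  finally have "\<alpha> * ((p0 + p1) * t) + \<beta> * ((p0 - p1) * e) \<le> (p0 + p1) * (t * (\<alpha> + \<bar>\<beta>\<bar> * c))"
    by (simp add: algebra_simps)
  also have "\<dots> \<le> (p0 + p1) * (t * max 0 (\<alpha> + \<bar>\<beta>\<bar> * c))"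
    using assms by (intro mult_left_mono) auto
  also have "\<dots> \<le> 1 * (t * max 0 (\<alpha> + \<bar>\<beta>\<bar> * c))"
    using assms by (intro mult_right_mono) auto
  finally show ?thesis
    by simp
qed

lemma hidden_state_contribution_le:
  assumes n: "n \<ge> 1" and "psd2 A"
    and p: "\<And>y. y < n \<Longrightarrow> 0 \<le> p0 y \<and> 0 \<le> p1 y \<and> p0 y + p1 y \<le> 1"
  shows "(\<Sum>y<n. \<alpha> * ((p0 y + p1 y) * re_tr A) + \<beta> * ((p0 y - p1 y) * spin_expect (theta n y) A))
    \<le> re_tr A * (real n * polygon_support n (\<alpha>, \<beta>))"
proof -
  obtain \<psi> where \<psi>: "\<And>t. \<bar>spin_expect t A\<bar> \<le> re_tr A * \<bar>cos (t - \<psi>)\<bar>"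
    using psd2_spin_expect_le[OF \<open>psd2 A\<close>] by blast
  have "(\<Sum>y<n. \<alpha> * ((p0 y + p1 y) * re_tr A) + \<beta> * ((p0 y - p1 y) * spin_expect (theta n y) A))
      \<le> (\<Sum>y<n. re_tr A * max 0 (\<alpha> + \<bar>\<beta>\<bar> * \<bar>cos (theta n y - \<psi>)\<bar>))"
    using p \<psi> psd2_re_tr_nonneg[OF \<open>psd2 A\<close>] by (intro sum_mono weighted_outcome_le) auto
  also have "\<dots> \<le> re_tr A * (real n * polygon_support n (\<alpha>, \<beta>))"
    unfolding sum_distrib_left[symmetric]
    using sum_pos_part_le_polygon_support[OF n] psd2_re_tr_nonneg[OF \<open>psd2 A\<close>]
    by (intro mult_left_mono) auto
  finally show ?thesis .
qed

lemma attainable_inner_le_polygon_support: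
  assumes n: "n \<ge> 1" and "z \<in> attainable n"
  shows "inner a z \<le> polygon_support n a"
proof -
  obtain \<alpha> \<beta> where a: "a = (\<alpha>, \<beta>)"
    by fastforce
  obtain m rl p where model: "lhs_model n m rl p" and z: "z = (model_T n m rl p, model_W n m rl p)"
    using \<open>z \<in> attainable n\<close> attainable_iff_model by blast
  have "(\<Sum>l<m. re_tr (rl l)) = Re (\<Sum>l<m. tr2 (rl l))"
    unfolding re_tr_def tr2_eq by simp
  then have re_tr_sum: "(\<Sum>l<m. re_tr (rl l)) = 1"
    using model unfolding lhs_model_def by simp
  have psd: "psd2 (rl l)" if "l < m" for l
    using model that unfolding lhs_model_def by blast
  have probs: "0 \<le> p B0 y l \<and> 0 \<le> p B1 y l \<and> p B0 y l + p B1 y l \<le> 1" if "y < n" "l < m" for y l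
    using model that unfolding lhs_model_def by (metis le_add_same_cancel1)
  define F where "F l y = \<alpha> * ((p B0 y l + p B1 y l) * re_tr (rl l))
      + \<beta> * ((p B0 y l - p B1 y l) * spin_expect (theta n y) (rl l))" for l y
  have "inner a z = (1 / real n) * (\<alpha> * (\<Sum>y<n. \<Sum>l<m. (p B0 y l + p B1 y l) * re_tr (rl l))
      + \<beta> * (\<Sum>y<n. \<Sum>l<m. (p B0 y l - p B1 y l) * spin_expect (theta n y) (rl l)))"
    unfolding a z model_T_def model_W_def by (simp add: algebra_simps)
  also have "\<dots> = (1 / real n) * (\<Sum>y<n. \<Sum>l<m. F l y)"
    unfolding F_def by (simp add: sum_distrib_left sum.distrib)
  also have "\<dots> = (1 / real n) * (\<Sum>l<m. \<Sum>y<n. F l y)"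
    by (subst sum.swap) (rule refl)
  also have "\<dots> \<le> (1 / real n) * (\<Sum>l<m. re_tr (rl l) * (real n * polygon_support n (\<alpha>, \<beta>)))"
    unfolding F_def using psd probs by (intro mult_left_mono sum_mono hidden_state_contribution_le[OF n]) auto
  also have "\<dots> = polygon_support n a"
    using n re_tr_sum a by (simp flip: sum_distrib_right)
  finally show ?thesis .
qed

lemma attainable_eq_convex_hull_polygon:
  assumes n: "n \<ge> 1"
  shows "attainable n = convex hull (polygon_vertices n)"
proof
  have "polygon_vertices n \<noteq> {}"
    using polygon_vertices_eq by auto
  then show "attainable n \<subseteq> convex hull (polygon_vertices n)"
    using finite_polygon_vertices attainable_inner_le_polygon_support[OF n]
    unfolding polygon_support_def by (blast intro: mem_convex_hull_if_inner_le_Max)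
  show "convex hull (polygon_vertices n) \<subseteq> attainable n"
    using polygon_vertices_subset_attainable[OF n] convex_attainable by (rule hull_minimal)
qed

section \<open>The vertices are extreme\<close>

lemma extreme_point_of_convex_hull_if_exposed:
  fixes P :: "'a::euclidean_space set"
  assumes "finite P" "v \<in> P" and exposed: "\<And>w. w \<in> P - {v} \<Longrightarrow> inner a w < inner a v"
  shows "v extreme_point_of (convex hull P)"
proof -
  have "convex hull (P - {v}) \<subseteq> {x. inner a x < inner a v}"
    using exposed by (intro hull_minimal convex_halfspace_lt) auto
  then have "v \<notin> convex hull (P - {v})"
    by auto
  then have "v extreme_point_of (convex hull (insert v (P - {v})))"
    using \<open>finite P\<close> by (intro extreme_point_of_convex_hull_insert) auto
  then show ?thesis
    using \<open>v \<in> P\<close> by (simp add: insert_absorb)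
qed

lemma strict_chain_less:
  fixes f :: "nat \<Rightarrow> real"
  assumes "j < k" "\<And>i. j \<le> i \<Longrightarrow> i < k \<Longrightarrow> f i < f (Suc i)"
  shows "f j < f k"
  using assms
proof (induction k)
  case (Suc k)
  show ?case
  proof (cases "j = k")
    case False
    then have "f j < f k"
      using Suc by simp
    then show ?thesis
      using Suc.prems(2)[of k] Suc.prems(1) False by simp
  qed (use Suc.prems in simp)
qed simp

text \<open>
  The slope \<open>c\<close> is minus the mean of the two increments around \<open>k\<close> (or \<open>0\<close> if \<open>k = n\<close>), so the
  tilted sequence increases up to \<open>k\<close> and decreases after it.
\<close>
lemma strictly_concave_seq_tilted_max:
  fixes g :: "nat \<Rightarrow> real"
  assumes pos: "\<And>j. j < n \<Longrightarrow> 0 < g (Suc j) - g j"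
    and dec: "\<And>i j. i < j \<Longrightarrow> j < n \<Longrightarrow> g (Suc j) - g j < g (Suc i) - g i"
    and "1 \<le> k" "k \<le> n"
  obtains c where "\<And>j. j \<le> n \<Longrightarrow> j \<noteq> k \<Longrightarrow> c * real j + g j < c * real k + g k"
proof -
  define D where "D j = g (Suc j) - g j" for j
  define c where "c = (if k = n then 0 else - (D (k - 1) + D k) / 2)"
  define f where "f j = c * real j + g j" for j
  have f_Suc: "f (Suc i) = f i + (c + D i)" for i
    unfolding f_def D_def by (simp add: algebra_simps)
  have D_le: "D j \<le> D i" if "i \<le> j" "j < n" for i j
    using dec[of i j] that unfolding D_def by (cases "i = j") auto
  have up: "0 < c + D i" if "i < k" for i
  proof (cases "k = n")
    case True
    then show ?thesis
      using pos[of i] that unfolding c_def D_def by simp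
  next
    case False
    have "D (k - 1) \<le> D i"
      using D_le[of i "k - 1"] that \<open>k \<le> n\<close> by simp
    moreover have "D k < D (k - 1)"
      using dec[of "k - 1" k] \<open>1 \<le> k\<close> \<open>k \<le> n\<close> False unfolding D_def by simp
    moreover have "c = - (D (k - 1) + D k) / 2"
      using False unfolding c_def by simp
    ultimately show ?thesis
      by (simp add: field_simps)
  qed
  have down: "c + D i < 0" if "k \<le> i" "i < n" for i
  proof -
    have "D i \<le> D k"
      using D_le[of k i] that by simp
    moreover have "D k < D (k - 1)"
      using dec[of "k - 1" k] \<open>1 \<le> k\<close> that unfolding D_def by simp
    moreover have "c = - (D (k - 1) + D k) / 2"
      using that unfolding c_def by simp
    ultimately show ?thesis
      by (simp add: field_simps)
  qed
  have "f j < f k" if "j \<le> n" "j \<noteq> k" for j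
  proof (cases "j < k")
    case True
    show ?thesis
    proof (rule strict_chain_less[OF True])
      show "f i < f (Suc i)" if "j \<le> i" "i < k" for i
        using up[of i] f_Suc[of i] that by simp
    qed
  next
    case False
    then have "k < j"
      using \<open>j \<noteq> k\<close> by simp
    have "- f k < - f j"
    proof (rule strict_chain_less[OF \<open>k < j\<close>])
      show "- f i < - f (Suc i)" if "k \<le> i" "i < j" for i
        using down[of i] f_Suc[of i] that \<open>j \<le> n\<close> by simp
    qed
    then show ?thesis
      by simp
  qed
  then show ?thesis
    using that unfolding f_def by blast
qed

lemma vertex_height_0 [simp]: "vertex_height n 0 = 0"
  by (simp add: vertex_height_def)

lemma vertex_height_eq: "vertex_height n j = sin (real j * (pi / (2 * real n))) / (real n * sin (pi / (2 * real n)))"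
  unfolding vertex_height_def by (simp add: field_simps)

lemma vertex_height_pos:
  assumes "1 \<le> j" "j \<le> n"
  shows "0 < vertex_height n j"
proof -
  have "real j * (pi / (2 * real n)) \<le> pi / 2"
    using assms by (simp add: field_simps)
  then have "real j * (pi / (2 * real n)) < pi"
    using pi_gt_zero by linarith
  then have "0 < sin (real j * (pi / (2 * real n)))"
    using assms by (intro sin_gt_zero) auto
  then show ?thesis
    unfolding vertex_height_eq using assms sin_pi_div_two_n_pos[of n] by simp
qed

lemma vertex_height_Suc_diff:
  "vertex_height n (Suc j) - vertex_height n j
     = 2 * cos ((2 * real j + 1) * (pi / (2 * real n)) / 2) * sin (pi / (2 * real n) / 2)
       / (real n * sin (pi / (2 * real n)))"
proof -
  define x where "x = pi / (2 * real n)"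
  define A where "A = (2 * real j + 1) * x / 2"
  have "sin (real (Suc j) * x) = sin (A + x/2)" "sin (real j * x) = sin (A - x/2)"
    unfolding A_def by (rule arg_cong[where f=sin], simp add: field_simps)+
  then have "vertex_height n (Suc j) - vertex_height n j = (sin (A + x/2) - sin (A - x/2)) / (real n * sin x)"
    unfolding vertex_height_eq x_def[symmetric] by (simp add: diff_divide_distrib)
  also have "sin (A + x/2) - sin (A - x/2) = 2 * cos A * sin (x/2)"
    by (simp add: sin_add sin_diff)
  finally show ?thesis
    unfolding x_def A_def .
qed

text \<open>The increments are \<open>cos\<close> at the points \<open>(2j + 1) \<pi>/4n\<close> of \<open>(0, \<pi>/2)\<close>, up to a positive factor.\<close>
lemma vertex_height_diff_pos_decreasing:
  assumes n: "n \<ge> 1"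
  shows "\<And>j. j < n \<Longrightarrow> 0 < vertex_height n (Suc j) - vertex_height n j"
    and "\<And>i j. i < j \<Longrightarrow> j < n \<Longrightarrow>
      vertex_height n (Suc j) - vertex_height n j < vertex_height n (Suc i) - vertex_height n i"
proof -
  define x where "x = pi / (2 * real n)"
  have "0 < x"
    using n unfolding x_def by simp
  have factor_pos: "0 < sin (x/2) / (real n * sin x)"
    using n sin_pi_div_two_n_pos[OF n] \<open>0 < x\<close> unfolding x_def
    by (intro divide_pos_pos mult_pos_pos sin_gt_zero) (auto simp: field_simps)
  have diff: "vertex_height n (Suc j) - vertex_height n j = 2 * cos ((2 * real j + 1) * x / 2) * (sin (x/2) / (real n * sin x))" for j
    unfolding vertex_height_Suc_diff x_def by simp
  have range: "0 \<le> (2 * real j + 1) * x / 2" "(2 * real j + 1) * x / 2 < pi/2" if "j < n" for j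
  proof -
    have "(2 * real j + 1) * x < (2 * real n) * x"
      using that \<open>0 < x\<close> by (intro mult_strict_right_mono) auto
    moreover have "(2 * real n) * x = pi"
      using n unfolding x_def by simp
    ultimately show "0 \<le> (2 * real j + 1) * x / 2" "(2 * real j + 1) * x / 2 < pi/2"
      using \<open>0 < x\<close> by simp_all
  qed
  show "0 < vertex_height n (Suc j) - vertex_height n j" if "j < n" for j
    unfolding diff using range[OF that] factor_pos by (intro mult_pos_pos cos_gt_zero_pi) auto
  show "vertex_height n (Suc j) - vertex_height n j < vertex_height n (Suc i) - vertex_height n i"
    if "i < j" "j < n" for i j
  proof -
    have "(2 * real i + 1) * x / 2 < (2 * real j + 1) * x / 2"
      using that \<open>0 < x\<close> by (simp add: field_simps)
    then have "cos ((2 * real j + 1) * x / 2) < cos ((2 * real i + 1) * x / 2)"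
      using range[of i] range[of j] that by (intro cos_monotone_0_pi) auto
    then show ?thesis
      unfolding diff using factor_pos by (intro mult_strict_right_mono) auto
  qed
qed

lemma polygon_vertex_exposed:
  assumes n: "n \<ge> 1" and "v \<in> polygon_vertices n"
  obtains a where "\<And>w. w \<in> polygon_vertices n - {v} \<Longrightarrow> inner a w < inner a v"
proof -
  obtain k s where v: "v = (real k / real n, s * vertex_height n k)" and "k \<le> n" and s: "s \<in> {-1, 1::real}"
    using \<open>v \<in> polygon_vertices n\<close> unfolding polygon_vertices_eq by auto
  have w_cases: "\<exists>j s'. w = (real j / real n, s' * vertex_height n j) \<and> j \<le> n \<and> s' \<in> {-1, 1}"
    if "w \<in> polygon_vertices n" for w :: "real \<times> real"
    using that unfolding polygon_vertices_eq by auto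
  show ?thesis
  proof (cases "k = 0")
    case True
    have "inner (-1, 0) w < inner (-1, 0) v" if "w \<in> polygon_vertices n - {v}" for w
      using w_cases[of w] that n v True by (auto simp: field_simps)
    then show ?thesis
      using that by blast
  next
    case False
    obtain c where c: "\<And>j. j \<le> n \<Longrightarrow> j \<noteq> k \<Longrightarrow> c * real j + vertex_height n j < c * real k + vertex_height n k"
      using strictly_concave_seq_tilted_max[of n "vertex_height n" k] vertex_height_diff_pos_decreasing[OF n]
        False \<open>k \<le> n\<close> by (metis less_one not_less)
    have "inner (c * real n, s) w < inner (c * real n, s) v" if w_mem: "w \<in> polygon_vertices n - {v}" for w
    proof -
      obtain j s' where w: "w = (real j / real n, s' * vertex_height n j)" "j \<le> n" "s' \<in> {-1, 1}"
        using w_cases[of w] w_mem by auto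
      have "c * real j + s * s' * vertex_height n j \<le> c * real j + vertex_height n j"
        using s w vertex_height_pos[of j n] by (cases "j = 0") (auto simp: less_imp_le)
      then have "c * real j + s * s' * vertex_height n j < c * real k + vertex_height n k"
        if "j \<noteq> k \<or> s' \<noteq> s"
        using c[of j] w that s vertex_height_pos[of k n] False \<open>k \<le> n\<close> by (cases "j = k") auto
      moreover have "j \<noteq> k \<or> s' \<noteq> s"
        using w_mem v w by auto
      ultimately show ?thesis
        using n s v w by (auto simp: field_simps)
    qed
    then show ?thesis
      using that by blast
  qed
qed

theorem mainTheorem7:
  fixes n :: nat
  assumes "n \<ge> 1"
  shows "attainable n = convex hull (polygon_vertices n) \<and>
         (\<forall>v\<in>polygon_vertices n. v extreme_point_of (attainable n))"
proof -
  have hull: "attainable n = convex hull (polygon_vertices n)"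
    using attainable_eq_convex_hull_polygon[OF assms] .
  have "v extreme_point_of (attainable n)" if "v \<in> polygon_vertices n" for v
    using polygon_vertex_exposed[OF assms that] finite_polygon_vertices that
    unfolding hull by (metis extreme_point_of_convex_hull_if_exposed)
  then show ?thesis
    using hull by blast
qed

end
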